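(* Let $f:\mathbb{Z}\to\mathbb{R}^{+}$ be a function such that $\|f'\|_{\infty}<\infty$ and $\widetilde{M}f$ is not identically $+\infty$. Then $\widetilde{M}f(n)<\infty$ for all $n\in\mathbb{Z}$.
   Context: For $f:\mathbb{Z}\to\mathbb{R}$, the uncentered discrete Hardy–Littlewood maximal function is $\widetilde{M}f(n)=\sup_{r,s\in\mathbb{Z}_{\ge 0}}\frac{1}{r+s+1}\sum_{k=-s}^{r}|f(n+k)|$ (possibly $+\infty$). For $g:\mathbb{Z}\to\mathbb{R}$, $g'(n)=g(n+1)-g(n)$ and $\|g\|_\infty=\sup_{n\in\mathbb{Z}}|g(n)|$. *)

theory Defs
  imports "HOL-Analysis.Analysis"
begin

definition unc_max :: "(int \<Rightarrow> real) \<Rightarrow> int \<Rightarrow> ereal" where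
  "unc_max f n = (SUP rs \<in> (UNIV :: (nat \<times> nat) set).
     ereal ((\<Sum>k = - int (snd rs) .. int (fst rs). \<bar>f (n + k)\<bar>) / real (fst rs + snd rs + 1)))"

definition ddiff :: "(int \<Rightarrow> real) \<Rightarrow> int \<Rightarrow> real" where
  "ddiff g n = g (n + 1) - g n"

end

theory Submission
  imports Defs
begin

(* If the uncentered maximal function is finite at m, then at any n it is at most
   (1 + |n - m|) times its value at m: every window containing n can be enlarged to one
   containing m at the cost of at most |n - m| extra points, which multiplies its length
   by at most 1 + |n - m|. *)

lemma sum_window_eq_sum_interval:
  fixes g :: "int \<Rightarrow> 'a::comm_monoid_add"
  shows "(\<Sum>k = - int s .. int r. g (n + k)) = (\<Sum>j = n - int s .. n + int r. g j)"
  by (rule sum.reindex_bij_witness[where i = "\<lambda>j. j - n" and j = "\<lambda>k. n + k"]) auto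

lemma interval_average_le_unc_max:
  assumes "a \<le> n" "n \<le> b"
  shows "ereal ((\<Sum>j = a .. b. \<bar>f j\<bar>) / of_int (b - a + 1)) \<le> unc_max f n"
proof -
  define r s where "r = nat (b - n)" and "s = nat (n - a)"
  have ab: "a = n - int s" "b = n + int r"
    using assms by (simp_all add: r_def s_def)
  have "ereal ((\<Sum>k = - int s .. int r. \<bar>f (n + k)\<bar>) / real (r + s + 1)) \<le> unc_max f n"
    unfolding unc_max_def by (rule SUP_upper2[of "(r, s)"]) auto
  then show ?thesis
    unfolding ab sum_window_eq_sum_interval[where g = "\<lambda>j. \<bar>f j\<bar>"] by (simp add: add_ac)
qed

lemma unc_max_nonneg: "0 \<le> unc_max f n"
proof -
  have "ereal \<bar>f n\<bar> \<le> unc_max f n"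
    using interval_average_le_unc_max[of n n n f] by simp
  then show ?thesis
    by (rule order_trans[rotated]) simp
qed

lemma unc_max_le_ereal:
  assumes "\<And>a b. a \<le> n \<Longrightarrow> n \<le> b \<Longrightarrow> (\<Sum>j = a .. b. \<bar>f j\<bar>) \<le> C * of_int (b - a + 1)"
  shows "unc_max f n \<le> ereal C"
  unfolding unc_max_def
proof (rule SUP_least, clarify)
  fix r s :: nat
  have "(\<Sum>j = n - int s .. n + int r. \<bar>f j\<bar>) \<le> C * real (r + s + 1)"
    using assms[of "n - int s" "n + int r"] by (simp add: algebra_simps)
  then show "ereal ((\<Sum>k = - int (snd (r, s)) .. int (fst (r, s)). \<bar>f (n + k)\<bar>)
      / real (fst (r, s) + snd (r, s) + 1)) \<le> ereal C"
    by (simp add: sum_window_eq_sum_interval[where g = "\<lambda>j. \<bar>f j\<bar>"] divide_le_eq)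
qed

lemma unc_max_le_translate:
  "unc_max f n \<le> ereal (1 + of_int \<bar>n - m\<bar>) * unc_max f m"
proof (cases "unc_max f m")
  case (real B)
  let ?d = "of_int \<bar>n - m\<bar> :: real"
  have "B \<ge> 0"
    using unc_max_nonneg[of f m] real by simp
  have sum_le: "(\<Sum>j = a .. b. \<bar>f j\<bar>) \<le> B * of_int (b - a + 1)" if "a \<le> m" "m \<le> b" for a b
    using interval_average_le_unc_max[OF that, of f] real that by (simp add: divide_le_eq mult.commute)
  have "unc_max f n \<le> ereal ((1 + ?d) * B)"
  proof (rule unc_max_le_ereal)
    fix a b assume "a \<le> n" "n \<le> b"
    have "(\<Sum>j = a .. b. \<bar>f j\<bar>) \<le> (\<Sum>j = min a m .. max b m. \<bar>f j\<bar>)"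
      by (rule sum_mono2) auto
    also have "\<dots> \<le> B * of_int (max b m - min a m + 1)"
      by (rule sum_le) auto
    also have "\<dots> \<le> B * (of_int (b - a + 1) + ?d)"
    proof -
      have "max b m - min a m + 1 \<le> (b - a + 1) + \<bar>n - m\<bar>"
        using \<open>a \<le> n\<close> \<open>n \<le> b\<close> by linarith
      then show ?thesis
        using \<open>B \<ge> 0\<close> by (intro mult_left_mono) (simp_all only: of_int_add[symmetric] of_int_le_iff)
    qed
    also have "\<dots> \<le> B * (of_int (b - a + 1) * (1 + ?d))"
    proof -
      have "1 \<le> (of_int (b - a + 1) :: real)"
        using \<open>a \<le> n\<close> \<open>n \<le> b\<close> by simp
      then have "?d \<le> of_int (b - a + 1) * ?d"
        using mult_right_mono[of 1 "of_int (b - a + 1)" ?d] by simp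
      then show ?thesis
        using \<open>B \<ge> 0\<close> by (intro mult_left_mono) (simp_all add: algebra_simps)
    qed
    finally show "(\<Sum>j = a .. b. \<bar>f j\<bar>) \<le> (1 + ?d) * B * of_int (b - a + 1)"
      by (simp add: algebra_simps)
  qed
  then show ?thesis
    using real by simp
next
  case PInf
  then show ?thesis
    by (simp; arith)
next
  case MInf
  then show ?thesis
    using unc_max_nonneg[of f m] by simp
qed

theorem lemma5p3:
  fixes f :: "int \<Rightarrow> real"
  assumes pos: "\<And>n. f n > 0"
    and lip: "bdd_above (range (\<lambda>n. \<bar>ddiff f n\<bar>))"
    and notinf: "\<exists>n. unc_max f n \<noteq> \<infinity>"
  shows "\<forall>n. unc_max f n < \<infinity>"
proof
  fix n
  obtain m where "unc_max f m \<noteq> \<infinity>"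
    using notinf by blast
  then have "ereal (1 + of_int \<bar>n - m\<bar>) * unc_max f m < \<infinity>"
    by (simp add: less_top[symmetric])
  then show "unc_max f n < \<infinity>"
    using unc_max_le_translate[of f n m] by (rule le_less_trans[rotated])
qed

end
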